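(* Let $P$ satisfy (S1)–(S4). Let $h_1,h_2,h_3\in P\setminus\{1\}$ and let $\bar h=(h_1)_1(h_2)_2(h_3)_3\in H$ be the element with $h_j$ at coordinate $j$ ($j=1,2,3$) and $1$ elsewhere. Then $\bar h$ is a $[\pm,t]$-commutator if and only if $\Xi(h_1,h_2,h_3)$ holds in $P$.
   Context: Conditions (S1)–(S4) on a finite group $P$: (S1) for all $a_1,a_2\in P$ there are $x,y$ with $a_2=x^{-1}a_1^{-1}yxy^{-1}$; (S2) for all $a_1,a_2,a_3$ there are $u,v$ with $a_2=a_3ua_1^{-1}a_3^{-1}vu^{-1}v^{-1}$; (S3) for all $u_1,u_2,u_3,u_4\ne1$ there are $x,y,z$ with $u_4=x^{-1}u_1xy^{-1}u_2yz^{-1}u_3z$; (S4) there are $u_1,u_2,u_3\ne1$ with $\Xi(u_1,u_2,u_3)$ false. Here $\Xi(u_1,u_2,u_3)$ means: $\exists x,y\in P\ (u_3=x^{-1}u_2^{-1}xy^{-1}u_1^{-1}y)$. $H=\bigoplus_{i\in\mathbb Z}H_i$, each $H_i$ a copy of $P$, elements finitely supported sequences $(h_i)_{i\in\mathbb Z}$; $(h)_j$ denotes the element with $h$ at coordinate $j$ and $1$ elsewhere. $\alpha((h_i)_i)=(h_{i+1})_i$. $\bar h\in H$ is a $[\pm,t]$-commutator if $\bar h=\bar g_1\alpha(\bar g_1^{-1})\alpha(\bar g_2)\bar g_2^{-1}$ or $\bar h=\alpha(\bar g_1)\bar g_1^{-1}\bar g_2\alpha(\bar g_2^{-1})$ for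 some $\bar g_1,\bar g_2\in H$. *)

theory Defs
  imports "HOL-Algebra.Group"
begin

definition Xi :: "('a, 'b) monoid_scheme \<Rightarrow> 'a \<Rightarrow> 'a \<Rightarrow> 'a \<Rightarrow> bool" where
  "Xi G u1 u2 u3 \<longleftrightarrow> (\<exists>x\<in>carrier G. \<exists>y\<in>carrier G.
     u3 = inv\<^bsub>G\<^esub> x \<otimes>\<^bsub>G\<^esub> inv\<^bsub>G\<^esub> u2 \<otimes>\<^bsub>G\<^esub> x \<otimes>\<^bsub>G\<^esub> inv\<^bsub>G\<^esub> y \<otimes>\<^bsub>G\<^esub> inv\<^bsub>G\<^esub> u1 \<otimes>\<^bsub>G\<^esub> y)"

definition S1 :: "('a, 'b) monoid_scheme \<Rightarrow> bool" where
  "S1 G \<longleftrightarrow> (\<forall>a1\<in>carrier G. \<forall>a2\<in>carrier G. \<exists>x\<in>carrier G. \<exists>y\<in>carrier G.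
     a2 = inv\<^bsub>G\<^esub> x \<otimes>\<^bsub>G\<^esub> inv\<^bsub>G\<^esub> a1 \<otimes>\<^bsub>G\<^esub> y \<otimes>\<^bsub>G\<^esub> x \<otimes>\<^bsub>G\<^esub> inv\<^bsub>G\<^esub> y)"

definition S2 :: "('a, 'b) monoid_scheme \<Rightarrow> bool" where
  "S2 G \<longleftrightarrow> (\<forall>a1\<in>carrier G. \<forall>a2\<in>carrier G. \<forall>a3\<in>carrier G. \<exists>u\<in>carrier G. \<exists>v\<in>carrier G.
     a2 = a3 \<otimes>\<^bsub>G\<^esub> u \<otimes>\<^bsub>G\<^esub> inv\<^bsub>G\<^esub> a1 \<otimes>\<^bsub>G\<^esub> inv\<^bsub>G\<^esub> a3 \<otimes>\<^bsub>G\<^esub> v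
          \<otimes>\<^bsub>G\<^esub> inv\<^bsub>G\<^esub> u \<otimes>\<^bsub>G\<^esub> inv\<^bsub>G\<^esub> v)"

definition S3 :: "('a, 'b) monoid_scheme \<Rightarrow> bool" where
  "S3 G \<longleftrightarrow> (\<forall>u1\<in>carrier G. \<forall>u2\<in>carrier G. \<forall>u3\<in>carrier G. \<forall>u4\<in>carrier G.
     u1 \<noteq> \<one>\<^bsub>G\<^esub> \<longrightarrow> u2 \<noteq> \<one>\<^bsub>G\<^esub> \<longrightarrow> u3 \<noteq> \<one>\<^bsub>G\<^esub> \<longrightarrow> u4 \<noteq> \<one>\<^bsub>G\<^esub> \<longrightarrow>
     (\<exists>x\<in>carrier G. \<exists>y\<in>carrier G. \<exists>z\<in>carrier G.
        u4 = inv\<^bsub>G\<^esub> x \<otimes>\<^bsub>G\<^esub> u1 \<otimes>\<^bsub>G\<^esub> x \<otimes>\<^bsub>G\<^esub> inv\<^bsub>G\<^esub> y \<otimes>\<^bsub>G\<^esub> u2 \<otimes>\<^bsub>G\<^esub> y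
             \<otimes>\<^bsub>G\<^esub> inv\<^bsub>G\<^esub> z \<otimes>\<^bsub>G\<^esub> u3 \<otimes>\<^bsub>G\<^esub> z))"

definition S4 :: "('a, 'b) monoid_scheme \<Rightarrow> bool" where
  "S4 G \<longleftrightarrow> (\<exists>u1\<in>carrier G. \<exists>u2\<in>carrier G. \<exists>u3\<in>carrier G.
     u1 \<noteq> \<one>\<^bsub>G\<^esub> \<and> u2 \<noteq> \<one>\<^bsub>G\<^esub> \<and> u3 \<noteq> \<one>\<^bsub>G\<^esub> \<and> \<not> Xi G u1 u2 u3)"

text \<open>The restricted direct sum H of copies of P indexed by the integers:
  finitely supported sequences, with pointwise operations.\<close>

definition Hcarrier :: "('a, 'b) monoid_scheme \<Rightarrow> (int \<Rightarrow> 'a) set" where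
  "Hcarrier G = {h. (\<forall>i. h i \<in> carrier G) \<and> finite {i. h i \<noteq> \<one>\<^bsub>G\<^esub>}}"

definition Hmul :: "('a, 'b) monoid_scheme \<Rightarrow> (int \<Rightarrow> 'a) \<Rightarrow> (int \<Rightarrow> 'a) \<Rightarrow> (int \<Rightarrow> 'a)" where
  "Hmul G g h = (\<lambda>i. g i \<otimes>\<^bsub>G\<^esub> h i)"

definition Hinv :: "('a, 'b) monoid_scheme \<Rightarrow> (int \<Rightarrow> 'a) \<Rightarrow> (int \<Rightarrow> 'a)" where
  "Hinv G g = (\<lambda>i. inv\<^bsub>G\<^esub> (g i))"

definition shift :: "(int \<Rightarrow> 'a) \<Rightarrow> (int \<Rightarrow> 'a)" where
  "shift h = (\<lambda>i. h (i + 1))"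

definition pm_t_commutator :: "('a, 'b) monoid_scheme \<Rightarrow> (int \<Rightarrow> 'a) \<Rightarrow> bool" where
  "pm_t_commutator G h \<longleftrightarrow> (\<exists>g1\<in>Hcarrier G. \<exists>g2\<in>Hcarrier G.
     h = Hmul G (Hmul G (Hmul G g1 (shift (Hinv G g1))) (shift g2)) (Hinv G g2)
   \<or> h = Hmul G (Hmul G (Hmul G (shift g1) (Hinv G g1)) g2) (shift (Hinv G g2)))"

definition elem3 :: "('a, 'b) monoid_scheme \<Rightarrow> 'a \<Rightarrow> 'a \<Rightarrow> 'a \<Rightarrow> (int \<Rightarrow> 'a)" where
  "elem3 G h1 h2 h3 = (\<lambda>i. if i = 1 then h1 else if i = 2 then h2 else if i = 3 then h3 else \<one>\<^bsub>G\<^esub>)"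

end

theory Submission
  imports Defs
begin

text \<open>In a \<open>[\<plusminus>,t]\<close>-commutator of the first kind the \<open>i\<close>-th coordinate is
  \<open>a_i a_(i+1)\<inverse> b_(i+1) b_i\<inverse>\<close>, so wherever it is trivial the quotient \<open>d_i = a_i\<inverse> b_i\<close>
  satisfies \<open>d_(i+1) = d_i\<close>; the second kind behaves alike. For \<open>(h1)_1 (h2)_2 (h3)_3\<close> this
  holds for all \<open>i \<notin> {1, 2, 3}\<close>, and as \<open>d\<close> is finitely supported it is trivial at 1 and at 4,
  i.e. \<open>b_1 = a_1\<close> and \<open>b_4 = a_4\<close>. Substituting, \<open>h1, h2, h3\<close> become words in
  \<open>a_1, \<dots>, a_4, b_2, b_3\<close> that satisfy \<open>\<Xi>\<close> with explicit witnesses. Conversely, witnesses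
  of \<open>\<Xi>\<close> yield a commutator of the second kind supported on the coordinates 2, 3, 4.\<close>

lemma finite_support_const_below:
  fixes f :: "int \<Rightarrow> 'a"
  assumes "finite {i. f i \<noteq> c}" and "\<And>i. i < m \<Longrightarrow> f (i + 1) = f i"
  shows "f m = c"
proof (rule ccontr)
  assume "f m \<noteq> c"
  have const: "f i = f m" if "i \<le> m" for i
    using that
  proof (induction i rule: int_le_induct)
    case (step i)
    then have "f (i - 1 + 1) = f (i - 1)" by (intro assms(2)) simp
    with step.IH show ?case by simp
  qed simp
  have "{..m} \<subseteq> {i. f i \<noteq> c}"
  proof
    fix i assume "i \<in> {..m}"
    with const[of i] \<open>f m \<noteq> c\<close> show "i \<in> {i. f i \<noteq> c}" by simp
  qed
  then have "finite {..m}" using assms(1) by (rule finite_subset)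
  then show False using infinite_Iic by blast
qed

lemma finite_support_const_above:
  fixes f :: "int \<Rightarrow> 'a"
  assumes "finite {i. f i \<noteq> c}" and "\<And>i. n \<le> i \<Longrightarrow> f (i + 1) = f i"
  shows "f n = c"
proof (rule ccontr)
  assume "f n \<noteq> c"
  have const: "f i = f n" if "n \<le> i" for i
    using that
  proof (induction i rule: int_ge_induct)
    case (step i)
    then have "f (i + 1) = f i" by (intro assms(2))
    with step.IH show ?case by simp
  qed simp
  have "{n..} \<subseteq> {i. f i \<noteq> c}"
  proof
    fix i assume "i \<in> {n..}"
    with const[of i] \<open>f n \<noteq> c\<close> show "i \<in> {i. f i \<noteq> c}" by simp
  qed
  then have "finite {n..}" using assms(1) by (rule finite_subset)
  then show False using infinite_Ici by blast
qed

context group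
begin

lemma mult_inv_cancel_left [simp]:
  "x \<in> carrier G \<Longrightarrow> y \<in> carrier G \<Longrightarrow> x \<otimes> (inv x \<otimes> y) = y"
  by (simp add: m_assoc[symmetric])

lemma inv_mult_cancel_left [simp]:
  "x \<in> carrier G \<Longrightarrow> y \<in> carrier G \<Longrightarrow> inv x \<otimes> (x \<otimes> y) = y"
  by (simp add: m_assoc[symmetric])

lemma inv_mult_eq_one_iff:
  "x \<in> carrier G \<Longrightarrow> y \<in> carrier G \<Longrightarrow> inv x \<otimes> y = \<one> \<longleftrightarrow> y = x"
  by (metis inv_solve_left' one_closed r_one)

lemma Hcarrier_in_carrier: "g \<in> Hcarrier G \<Longrightarrow> g i \<in> carrier G"
  by (simp add: Hcarrier_def)

lemma Hcarrier_if_support_subset: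
  assumes "\<And>i. g i \<in> carrier G" and "{i. g i \<noteq> \<one>} \<subseteq> A" and "finite A"
  shows "g \<in> Hcarrier G"
  using assms(1) finite_subset[OF assms(2,3)] unfolding Hcarrier_def by simp

lemma finite_support_inv_mult_Hcarrier:
  assumes "a \<in> Hcarrier G" "b \<in> Hcarrier G"
  shows "finite {i. inv (a i) \<otimes> b i \<noteq> \<one>}"
proof (rule finite_subset)
  show "{i. inv (a i) \<otimes> b i \<noteq> \<one>} \<subseteq> {i. a i \<noteq> \<one>} \<union> {i. b i \<noteq> \<one>}"
    by auto
  show "finite ({i. a i \<noteq> \<one>} \<union> {i. b i \<noteq> \<one>})"
    using assms by (simp add: Hcarrier_def)
qed

lemma Hcarrier_agree_at_ends:
  assumes a: "a \<in> Hcarrier G" and b: "b \<in> Hcarrier G"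
    and step: "\<And>i. i < m \<or> n \<le> i \<Longrightarrow> inv (a (i + 1)) \<otimes> b (i + 1) = inv (a i) \<otimes> b i"
  shows "b m = a m" and "b n = a n"
proof -
  have fin: "finite {i. inv (a i) \<otimes> b i \<noteq> \<one>}"
    using a b by (rule finite_support_inv_mult_Hcarrier)
  have "inv (a m) \<otimes> b m = \<one>"
    using fin step by (rule finite_support_const_below) simp
  then show "b m = a m"
    using a b by (simp add: Hcarrier_in_carrier inv_mult_eq_one_iff)
  have "inv (a n) \<otimes> b n = \<one>"
    using fin step by (rule finite_support_const_above) simp
  then show "b n = a n"
    using a b by (simp add: Hcarrier_in_carrier inv_mult_eq_one_iff)
qed

lemma inv_mult_eq_if_commutator1_one:
  assumes "x \<in> carrier G" "y \<in> carrier G" "u \<in> carrier G" "v \<in> carrier G"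
    and "x \<otimes> inv y \<otimes> v \<otimes> inv u = \<one>"
  shows "inv y \<otimes> v = inv x \<otimes> u"
proof -
  have "inv y \<otimes> v = inv x \<otimes> (x \<otimes> inv y \<otimes> v \<otimes> inv u) \<otimes> u"
    using assms(1-4) by (simp add: m_assoc)
  also have "\<dots> = inv x \<otimes> u"
    using assms by simp
  finally show ?thesis .
qed

lemma inv_mult_eq_if_commutator2_one:
  assumes "x \<in> carrier G" "y \<in> carrier G" "u \<in> carrier G" "v \<in> carrier G"
    and "y \<otimes> inv x \<otimes> u \<otimes> inv v = \<one>"
  shows "inv y \<otimes> v = inv x \<otimes> u"
proof -
  have "inv x \<otimes> u = inv y \<otimes> (y \<otimes> inv x \<otimes> u \<otimes> inv v) \<otimes> v"
    using assms(1-4) by (simp add: m_assoc)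
  also have "\<dots> = inv y \<otimes> v"
    using assms by simp
  finally show ?thesis by (rule sym)
qed

lemma Xi_commutator1_words:
  assumes "a1 \<in> carrier G" "a2 \<in> carrier G" "a3 \<in> carrier G" "b2 \<in> carrier G" "b3 \<in> carrier G"
  shows "Xi G (a1 \<otimes> inv a2 \<otimes> b2 \<otimes> inv a1) (a2 \<otimes> inv a3 \<otimes> b3 \<otimes> inv b2) (a3 \<otimes> inv b3)"
  unfolding Xi_def
proof (intro bexI)
  show "a3 \<otimes> inv b3 = inv (b2 \<otimes> inv a3) \<otimes> inv (a2 \<otimes> inv a3 \<otimes> b3 \<otimes> inv b2)
      \<otimes> (b2 \<otimes> inv a3) \<otimes> inv (a1 \<otimes> inv a3) \<otimes> inv (a1 \<otimes> inv a2 \<otimes> b2 \<otimes> inv a1)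
      \<otimes> (a1 \<otimes> inv a3)"
    using assms by (simp add: m_assoc inv_mult_group)
qed (use assms in auto)

lemma Xi_commutator2_words:
  assumes "a2 \<in> carrier G" "a3 \<in> carrier G" "a4 \<in> carrier G" "b2 \<in> carrier G" "b3 \<in> carrier G"
  shows "Xi G (a2 \<otimes> inv b2) (a3 \<otimes> inv a2 \<otimes> b2 \<otimes> inv b3) (a4 \<otimes> inv a3 \<otimes> b3 \<otimes> inv a4)"
  unfolding Xi_def
proof (intro bexI)
  show "a4 \<otimes> inv a3 \<otimes> b3 \<otimes> inv a4 = inv (a3 \<otimes> inv a4) \<otimes> inv (a3 \<otimes> inv a2 \<otimes> b2 \<otimes> inv b3)
      \<otimes> (a3 \<otimes> inv a4) \<otimes> inv (a2 \<otimes> inv a4) \<otimes> inv (a2 \<otimes> inv b2) \<otimes> (a2 \<otimes> inv a4)"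
    using assms by (simp add: m_assoc inv_mult_group)
qed (use assms in auto)

lemma Xi_if_elem3_eq_commutator1:
  assumes a: "a \<in> Hcarrier G" and b: "b \<in> Hcarrier G"
    and h: "elem3 G h1 h2 h3 = Hmul G (Hmul G (Hmul G a (shift (Hinv G a))) (shift b)) (Hinv G b)"
  shows "Xi G h1 h2 h3"
proof -
  have hi: "elem3 G h1 h2 h3 i = a i \<otimes> inv (a (i + 1)) \<otimes> b (i + 1) \<otimes> inv (b i)" for i
    using fun_cong[OF h, of i] by (simp add: Hmul_def Hinv_def shift_def)
  have "inv (a (i + 1)) \<otimes> b (i + 1) = inv (a i) \<otimes> b i" if "i < 1 \<or> 4 \<le> i" for i
    using that hi[of i] a b
    by (intro inv_mult_eq_if_commutator1_one) (auto simp: elem3_def Hcarrier_in_carrier)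
  note ends = Hcarrier_agree_at_ends[OF a b this]
  have "h1 = a 1 \<otimes> inv (a 2) \<otimes> b 2 \<otimes> inv (a 1)"
      "h2 = a 2 \<otimes> inv (a 3) \<otimes> b 3 \<otimes> inv (b 2)" "h3 = a 3 \<otimes> inv (b 3)"
    using hi[of 1] hi[of 2] hi[of 3] ends a b
    by (simp_all add: elem3_def Hcarrier_in_carrier m_assoc)
  then show ?thesis
    using a b by (simp add: Xi_commutator1_words Hcarrier_in_carrier)
qed

lemma Xi_if_elem3_eq_commutator2:
  assumes a: "a \<in> Hcarrier G" and b: "b \<in> Hcarrier G"
    and h: "elem3 G h1 h2 h3 = Hmul G (Hmul G (Hmul G (shift a) (Hinv G a)) b) (shift (Hinv G b))"
  shows "Xi G h1 h2 h3"
proof -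
  have hi: "elem3 G h1 h2 h3 i = a (i + 1) \<otimes> inv (a i) \<otimes> b i \<otimes> inv (b (i + 1))" for i
    using fun_cong[OF h, of i] by (simp add: Hmul_def Hinv_def shift_def)
  have "inv (a (i + 1)) \<otimes> b (i + 1) = inv (a i) \<otimes> b i" if "i < 1 \<or> 4 \<le> i" for i
    using that hi[of i] a b
    by (intro inv_mult_eq_if_commutator2_one) (auto simp: elem3_def Hcarrier_in_carrier)
  note ends = Hcarrier_agree_at_ends[OF a b this]
  have "h1 = a 2 \<otimes> inv (b 2)" "h2 = a 3 \<otimes> inv (a 2) \<otimes> b 2 \<otimes> inv (b 3)"
      "h3 = a 4 \<otimes> inv (a 3) \<otimes> b 3 \<otimes> inv (a 4)"
    using hi[of 1] hi[of 2] hi[of 3] ends a b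
    by (simp_all add: elem3_def Hcarrier_in_carrier m_assoc)
  then show ?thesis
    using a b by (simp add: Xi_commutator2_words Hcarrier_in_carrier)
qed

lemma Xi_if_pm_t_commutator_elem3:
  "pm_t_commutator G (elem3 G h1 h2 h3) \<Longrightarrow> Xi G h1 h2 h3"
  unfolding pm_t_commutator_def
  using Xi_if_elem3_eq_commutator1 Xi_if_elem3_eq_commutator2 by blast

lemma pm_t_commutator_elem3_if_Xi:
  assumes h: "h1 \<in> carrier G" "h2 \<in> carrier G" "h3 \<in> carrier G"
    and "Xi G h1 h2 h3"
  shows "pm_t_commutator G (elem3 G h1 h2 h3)"
proof -
  obtain x y where xy: "x \<in> carrier G" "y \<in> carrier G"
    and h3: "h3 = inv x \<otimes> inv h2 \<otimes> x \<otimes> inv y \<otimes> inv h1 \<otimes> y"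
    using \<open>Xi G h1 h2 h3\<close> unfolding Xi_def by blast
  \<comment> \<open>solves \<open>h_i = a_(i+1) a_i\<inverse> b_i b_(i+1)\<inverse>\<close> with \<open>a\<close>, \<open>b\<close> trivial outside 2, 3, 4\<close>
  define a :: "int \<Rightarrow> 'a" where
    "a i = (if i = 2 then y \<otimes> inv x else if i = 4 then inv x else \<one>)" for i
  define b :: "int \<Rightarrow> 'a" where
    "b i = (if i = 2 then inv h1 \<otimes> y \<otimes> inv x else if i = 3 then x \<otimes> h3 \<otimes> inv x
       else if i = 4 then inv x else \<one>)" for i
  have aH: "a \<in> Hcarrier G"
    by (rule Hcarrier_if_support_subset[where A = "{2, 4}"]) (use xy in \<open>auto simp: a_def\<close>)
  have bH: "b \<in> Hcarrier G"
    by (rule Hcarrier_if_support_subset[where A = "{2, 3, 4}"]) (use xy h in \<open>auto simp: b_def\<close>)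
  have "elem3 G h1 h2 h3 i = (Hmul G (Hmul G (Hmul G (shift a) (Hinv G a)) b) (shift (Hinv G b))) i"
    for i
  proof -
    consider "i = 1" | "i = 2" | "i = 3" | "i = 4" | "i \<notin> {1, 2, 3, 4}" by blast
    then show ?thesis
    proof cases
      case 5
      then have "i + 1 \<notin> {2, 3, 4}" by auto
      with 5 show ?thesis by (simp add: Hmul_def Hinv_def shift_def elem3_def a_def b_def)
    qed (use xy h in \<open>simp_all add: Hmul_def Hinv_def shift_def elem3_def a_def b_def
                                   m_assoc inv_mult_group h3\<close>)
  qed
  then show ?thesis
    unfolding pm_t_commutator_def using aH bH by blast
qed

end

theorem lemma4p5:
  fixes G :: "('a, 'b) monoid_scheme"
  assumes "group G" and "finite (carrier G)"
    and "S1 G" and "S2 G" and "S3 G" and "S4 G"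
    and "h1 \<in> carrier G" and "h2 \<in> carrier G" and "h3 \<in> carrier G"
    and "h1 \<noteq> \<one>\<^bsub>G\<^esub>" and "h2 \<noteq> \<one>\<^bsub>G\<^esub>" and "h3 \<noteq> \<one>\<^bsub>G\<^esub>"
  shows "pm_t_commutator G (elem3 G h1 h2 h3) \<longleftrightarrow> Xi G h1 h2 h3"
  using group.Xi_if_pm_t_commutator_elem3[OF assms(1)]
    group.pm_t_commutator_elem3_if_Xi[OF assms(1,7-9)]
  by blast

end
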